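(* Fix an integer $k\geq1$ and $V=\{0,\ldots,k\}$. Let $\varphi$ be a Boolean function on $V$ with $\mathrm{eul}(\varphi)\geq0$. Then there exists a Boolean function $\varphi_{\min}$ on $V$ with $\varphi_{\min}\simeq\varphi$ all of whose satisfying valuations have even size.
   Context: A valuation is a subset $\nu\subseteq V$; $\nu^{(l)}$ is $\nu$ with membership of $l$ flipped. A Boolean function on $V$ is a map $\varphi:2^V\to\{\text{false},\text{true}\}$; $\mathrm{sat}(\varphi)$ is its set of satisfying valuations; $\mathrm{eul}(\varphi)=\sum_{\nu\in\mathrm{sat}(\varphi)}(-1)^{|\nu|}$. Write $\varphi\xrightarrow{+(\nu,l)}\varphi'$ if $\nu,\nu^{(l)}\notin\mathrm{sat}(\varphi)$ and $\mathrm{sat}(\varphi')=\mathrm{sat}(\varphi)\cup\{\nu,\nu^{(l)}\}$, and $\varphi\xrightarrow{-(\nu,l)}\varphi'$ if $\varphi'\xrightarrow{+(\nu,l)}\varphi$. Write $\varphi\xrightarrow{\pm}\varphi'$ if one of these holds for some $\nu,l$; $\simeq$ is the reflexive-transitive closure of $\xrightarrow{\pm}$ (an equivalence relation). *)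

theory Defs
  imports Main
begin

text \<open>Boolean functions on a finite variable set V are modelled as predicates
  on nat set; only their values on subsets of V matter (via sat).\<close>

type_synonym boolfun = "nat set \<Rightarrow> bool"

definition flip :: "nat set \<Rightarrow> nat \<Rightarrow> nat set" where
  "flip \<nu> l = (if l \<in> \<nu> then \<nu> - {l} else insert l \<nu>)"

definition sat :: "nat set \<Rightarrow> boolfun \<Rightarrow> nat set set" where
  "sat V \<phi> = {\<nu>. \<nu> \<subseteq> V \<and> \<phi> \<nu>}"

definition eul :: "nat set \<Rightarrow> boolfun \<Rightarrow> int" where
  "eul V \<phi> = (\<Sum>\<nu>\<in>sat V \<phi>. (-1) ^ card \<nu>)"

definition add_step :: "nat set \<Rightarrow> boolfun \<Rightarrow> nat set \<Rightarrow> nat \<Rightarrow> boolfun \<Rightarrow> bool" where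
  "add_step V \<phi> \<nu> l \<phi>' \<longleftrightarrow> \<nu> \<subseteq> V \<and> l \<in> V \<and>
     \<nu> \<notin> sat V \<phi> \<and> flip \<nu> l \<notin> sat V \<phi> \<and>
     sat V \<phi>' = sat V \<phi> \<union> {\<nu>, flip \<nu> l}"

definition pm_step :: "nat set \<Rightarrow> boolfun \<Rightarrow> boolfun \<Rightarrow> bool" where
  "pm_step V \<phi> \<phi>' \<longleftrightarrow> (\<exists>\<nu> l. add_step V \<phi> \<nu> l \<phi>' \<or> add_step V \<phi>' \<nu> l \<phi>)"

definition equiv_bf :: "nat set \<Rightarrow> boolfun \<Rightarrow> boolfun \<Rightarrow> bool" where
  "equiv_bf V = (pm_step V)\<^sup>*\<^sup>*"

end

theory Submission
  imports Defs
begin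

text \<open>Every move \<open>\<plusminus>(\<nu>, l)\<close> adds or removes two valuations of opposite parity,
  so \<open>eul\<close> is invariant under \<open>\<simeq>\<close>. If \<open>\<phi>\<close> has an odd satisfying valuation \<open>w\<close>,
  then \<open>eul \<phi> \<ge> 0\<close> forces an even one \<open>e\<close> as well. If \<open>w\<close> and \<open>e\<close> differ in a single
  coordinate, remove the pair \<open>w, e\<close>. Otherwise pick coordinates \<open>l \<noteq> l'\<close> where they
  differ, let \<open>v\<close> be \<open>w\<close> flipped at \<open>l\<close> and \<open>w'\<close> be \<open>v\<close> flipped at \<open>l'\<close>. If \<open>v\<close> is
  satisfying, remove the pair \<open>w, v\<close>; if \<open>w'\<close> is, it is an odd satisfying valuation
  closer to \<open>e\<close>; otherwise adding \<open>v, w'\<close> and removing \<open>w, v\<close> replaces \<open>w\<close> by \<open>w'\<close>.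
  Induction on the distance to \<open>e\<close> thus lowers the number of odd satisfying valuations
  without changing \<open>eul\<close>, and induction on that number finishes the proof.\<close>

lemma flip_neq [simp]: "flip \<nu> l \<noteq> \<nu>"
  by (auto simp: flip_def)

lemma flip_flip_neq: "l \<noteq> l' \<Longrightarrow> flip (flip \<nu> l) l' \<noteq> \<nu>"
  by (auto simp: flip_def split: if_splits)

lemma flip_subset: "\<nu> \<subseteq> V \<Longrightarrow> l \<in> V \<Longrightarrow> flip \<nu> l \<subseteq> V"
  by (auto simp: flip_def)

lemma even_card_flip_iff:
  assumes "finite \<nu>"
  shows "even (card (flip \<nu> l)) \<longleftrightarrow> odd (card \<nu>)"
proof (cases "l \<in> \<nu>")
  case True
  then have "card \<nu> = Suc (card (flip \<nu> l))"
    using card_Suc_Diff1[OF assms] by (simp add: flip_def)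
  then show ?thesis
    by simp
next
  case False
  then have "card (flip \<nu> l) = Suc (card \<nu>)"
    using assms by (simp add: flip_def)
  then show ?thesis
    by simp
qed

lemma finite_flip: "finite \<nu> \<Longrightarrow> finite (flip \<nu> l)"
  by (simp add: flip_def)

lemma odd_card_flip_flip_iff: "finite \<nu> \<Longrightarrow> odd (card (flip (flip \<nu> l) l')) \<longleftrightarrow> odd (card \<nu>)"
  by (simp add: even_card_flip_iff finite_flip)

lemma sym_diff_flip: "l \<in> sym_diff \<nu> \<mu> \<Longrightarrow> sym_diff (flip \<nu> l) \<mu> = sym_diff \<nu> \<mu> - {l}"
  by (auto simp: flip_def split: if_splits)

lemma sym_diff_eq_singleton:
  assumes "sym_diff \<nu> \<mu> = {l}"
  shows "\<mu> = flip \<nu> l"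
proof (rule set_eqI)
  fix x
  have "x \<in> sym_diff \<nu> \<mu> \<longleftrightarrow> x = l"
    using assms by blast
  then show "x \<in> \<mu> \<longleftrightarrow> x \<in> flip \<nu> l"
    by (auto simp: flip_def)
qed

lemma card_sym_diff_flip_flip_less:
  assumes "finite (sym_diff \<nu> \<mu>)" "l \<in> sym_diff \<nu> \<mu>" "l' \<in> sym_diff \<nu> \<mu>" "l \<noteq> l'"
  shows "card (sym_diff (flip (flip \<nu> l) l') \<mu>) < card (sym_diff \<nu> \<mu>)"
proof -
  have l': "l' \<in> sym_diff (flip \<nu> l) \<mu>"
    using assms(2-4) by (simp only: sym_diff_flip) blast
  have "sym_diff (flip (flip \<nu> l) l') \<mu> = sym_diff \<nu> \<mu> - {l} - {l'}"
    by (simp only: sym_diff_flip[OF l'] sym_diff_flip[OF assms(2)])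
  then show ?thesis
    by (simp only: le_less_trans[OF card_Diff1_le card_Diff1_less[OF assms(1,2)]])
qed

lemma sat_mem: "S \<subseteq> Pow V \<Longrightarrow> sat V (\<lambda>\<nu>. \<nu> \<in> S) = S"
  by (auto simp: sat_def)

lemma sat_subset_Pow: "sat V \<phi> \<subseteq> Pow V"
  by (auto simp: sat_def)

lemma finite_sat: "finite V \<Longrightarrow> finite (sat V \<phi>)"
  using sat_subset_Pow by (meson finite_Pow_iff finite_subset)

lemma pm_step_remove_pair:
  assumes "\<nu> \<in> sat V \<phi>" "flip \<nu> l \<in> sat V \<phi>" "l \<in> V"
  shows "pm_step V (\<lambda>\<mu>. \<mu> \<in> sat V \<phi> - {\<nu>, flip \<nu> l}) \<phi>"
proof -
  have "sat V (\<lambda>\<mu>. \<mu> \<in> sat V \<phi> - {\<nu>, flip \<nu> l}) = sat V \<phi> - {\<nu>, flip \<nu> l}"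
    using sat_subset_Pow by (intro sat_mem) blast
  then have "add_step V (\<lambda>\<mu>. \<mu> \<in> sat V \<phi> - {\<nu>, flip \<nu> l}) \<nu> l \<phi>"
    using assms by (auto simp: add_step_def sat_def)
  then show ?thesis
    unfolding pm_step_def by blast
qed

lemma pm_step_add_pair:
  assumes "\<nu> \<subseteq> V" "l \<in> V" "\<nu> \<notin> sat V \<phi>" "flip \<nu> l \<notin> sat V \<phi>"
  shows "pm_step V (\<lambda>\<mu>. \<mu> \<in> sat V \<phi> \<union> {\<nu>, flip \<nu> l}) \<phi>"
proof -
  have "sat V (\<lambda>\<mu>. \<mu> \<in> sat V \<phi> \<union> {\<nu>, flip \<nu> l}) = sat V \<phi> \<union> {\<nu>, flip \<nu> l}"
    using sat_subset_Pow assms(1,2) flip_subset by (intro sat_mem) blast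
  then have "add_step V \<phi> \<nu> l (\<lambda>\<mu>. \<mu> \<in> sat V \<phi> \<union> {\<nu>, flip \<nu> l})"
    using assms by (auto simp: add_step_def)
  then show ?thesis
    unfolding pm_step_def by blast
qed

lemma equiv_bf_trans: "equiv_bf V \<phi> \<psi> \<Longrightarrow> equiv_bf V \<psi> \<chi> \<Longrightarrow> equiv_bf V \<phi> \<chi>"
  unfolding equiv_bf_def by (rule rtranclp_trans)

lemma pm_step_imp_equiv_bf: "pm_step V \<phi> \<psi> \<Longrightarrow> equiv_bf V \<phi> \<psi>"
  unfolding equiv_bf_def by (rule r_into_rtranclp)

lemma equiv_bf_slide:
  assumes w: "w \<in> sat V \<phi>" and l: "l \<in> V" "l' \<in> V" "l \<noteq> l'"
    and not_sat: "flip w l \<notin> sat V \<phi>" "flip (flip w l) l' \<notin> sat V \<phi>"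
  shows "equiv_bf V (\<lambda>\<mu>. \<mu> \<in> insert (flip (flip w l) l') (sat V \<phi> - {w})) \<phi>"
proof -
  define v where "v = flip w l"
  define \<phi>' where "\<phi>' = (\<lambda>\<mu>. \<mu> \<in> sat V \<phi> \<union> {v, flip v l'})"
  have "w \<subseteq> V"
    using w by (simp add: sat_def)
  then have v: "v \<subseteq> V"
    using l(1) by (simp add: v_def flip_subset)
  have add_pair: "pm_step V \<phi>' \<phi>"
    unfolding \<phi>'_def using pm_step_add_pair[OF v l(2)] not_sat by (simp add: v_def)
  have sat_\<phi>': "sat V \<phi>' = sat V \<phi> \<union> {v, flip v l'}"
    unfolding \<phi>'_def using sat_subset_Pow v l(2) flip_subset by (intro sat_mem) blast
  have "pm_step V (\<lambda>\<mu>. \<mu> \<in> sat V \<phi>' - {w, flip w l}) \<phi>'"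
    using pm_step_remove_pair[of w V \<phi>' l] sat_\<phi>' w l(1) by (simp add: v_def)
  moreover have "sat V \<phi>' - {w, flip w l} = insert (flip (flip w l) l') (sat V \<phi> - {w})"
    using sat_\<phi>' not_sat(1) flip_flip_neq[OF l(3), of w] by (auto simp: v_def)
  ultimately have "pm_step V (\<lambda>\<mu>. \<mu> \<in> insert (flip (flip w l) l') (sat V \<phi> - {w})) \<phi>'"
    by simp
  then show ?thesis
    using equiv_bf_trans pm_step_imp_equiv_bf add_pair by blast
qed

lemma eul_add_step:
  assumes "finite V" "add_step V \<phi> \<nu> l \<phi>'"
  shows "eul V \<phi>' = eul V \<phi>"
proof -
  have \<nu>: "finite \<nu>" "\<nu> \<notin> sat V \<phi>" "flip \<nu> l \<notin> sat V \<phi>"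
    and sat': "sat V \<phi>' = insert \<nu> (insert (flip \<nu> l) (sat V \<phi>))"
    using assms by (auto simp: add_step_def intro: finite_subset)
  have "(-1::int) ^ card (flip \<nu> l) = - ((-1) ^ card \<nu>)"
    using even_card_flip_iff[OF \<nu>(1), of l] by (simp add: minus_one_power_iff)
  then show ?thesis
    unfolding eul_def sat' using \<nu> finite_sat[OF assms(1)] flip_neq[of \<nu> l, symmetric] by simp
qed

lemma eul_equiv_bf:
  assumes "finite V" "equiv_bf V \<phi> \<psi>"
  shows "eul V \<phi> = eul V \<psi>"
  using assms(2) unfolding equiv_bf_def
proof (induction rule: rtranclp_induct)
  case (step \<psi> \<chi>)
  then show ?case
    using eul_add_step[OF assms(1)] by (auto simp: pm_step_def)
qed simp

lemma eul_neg_if_all_odd: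
  assumes "finite V" "sat V \<phi> \<noteq> {}" "\<forall>\<nu>\<in>sat V \<phi>. odd (card \<nu>)"
  shows "eul V \<phi> < 0"
proof -
  have "eul V \<phi> = - int (card (sat V \<phi>))"
    unfolding eul_def using assms(3) by simp
  then show ?thesis
    using assms(1,2) finite_sat by fastforce
qed

definition odd_sat :: "nat set \<Rightarrow> boolfun \<Rightarrow> nat set set" where
  "odd_sat V \<phi> = {\<nu> \<in> sat V \<phi>. odd (card \<nu>)}"

lemma finite_odd_sat: "finite V \<Longrightarrow> finite (odd_sat V \<phi>)"
  unfolding odd_sat_def using finite_sat by simp

lemma cancel_flip_pair:
  assumes "finite V" "w \<in> sat V \<phi>" "odd (card w)" "flip w l \<in> sat V \<phi>" "l \<in> V"
  shows "\<exists>\<psi>. equiv_bf V \<psi> \<phi> \<and> card (odd_sat V \<psi>) < card (odd_sat V \<phi>)"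
proof -
  define \<psi> where "\<psi> = (\<lambda>\<mu>. \<mu> \<in> sat V \<phi> - {w, flip w l})"
  have "finite w"
    using assms(1,2) by (auto simp: sat_def intro: finite_subset)
  then have "even (card (flip w l))"
    using assms(3) even_card_flip_iff by blast
  moreover have "sat V \<psi> = sat V \<phi> - {w, flip w l}"
    unfolding \<psi>_def using sat_subset_Pow by (intro sat_mem) blast
  ultimately have "odd_sat V \<psi> = odd_sat V \<phi> - {w}"
    by (auto simp: odd_sat_def)
  moreover have "w \<in> odd_sat V \<phi>"
    using assms(2,3) by (simp add: odd_sat_def)
  ultimately have "card (odd_sat V \<psi>) < card (odd_sat V \<phi>)"
    using finite_odd_sat[OF assms(1)] by (metis card_Diff1_less)
  moreover have "equiv_bf V \<psi> \<phi>"
    unfolding \<psi>_def using assms(2,4,5) by (intro pm_step_imp_equiv_bf pm_step_remove_pair)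
  ultimately show ?thesis
    by blast
qed

lemma card_odd_sat_slide:
  assumes "finite V" "w \<in> odd_sat V \<phi>" "w' \<subseteq> V" "odd (card w')" "w' \<notin> sat V \<phi>"
  shows "card (odd_sat V (\<lambda>\<mu>. \<mu> \<in> insert w' (sat V \<phi> - {w}))) = card (odd_sat V \<phi>)"
proof -
  have "sat V (\<lambda>\<mu>. \<mu> \<in> insert w' (sat V \<phi> - {w})) = insert w' (sat V \<phi> - {w})"
    using sat_subset_Pow assms(3) by (intro sat_mem) blast
  then have "odd_sat V (\<lambda>\<mu>. \<mu> \<in> insert w' (sat V \<phi> - {w})) = insert w' (odd_sat V \<phi> - {w})"
    using assms(4) by (auto simp: odd_sat_def)
  moreover have "w' \<notin> odd_sat V \<phi> - {w}"
    using assms(5) by (simp add: odd_sat_def)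
  ultimately show ?thesis
    using finite_odd_sat[OF assms(1)] card_Suc_Diff1[OF _ assms(2)] by simp
qed

lemma move_odd_valuation:
  assumes "finite V" "w \<in> sat V \<phi>" "odd (card w)" "l \<in> V" "l' \<in> V" "l \<noteq> l'"
    and "flip w l \<notin> sat V \<phi>" "e \<in> sat V \<phi>" "e \<noteq> w"
  shows "\<exists>\<phi>'. equiv_bf V \<phi>' \<phi> \<and> card (odd_sat V \<phi>') = card (odd_sat V \<phi>) \<and>
    flip (flip w l) l' \<in> sat V \<phi>' \<and> e \<in> sat V \<phi>'"
proof (cases "flip (flip w l) l' \<in> sat V \<phi>")
  case True
  then show ?thesis
    using assms(8) unfolding equiv_bf_def by blast
next
  case False
  define w' where "w' = flip (flip w l) l'"
  define \<phi>' where "\<phi>' = (\<lambda>\<mu>. \<mu> \<in> insert w' (sat V \<phi> - {w}))"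
  have wV: "w \<subseteq> V"
    using assms(2) by (simp add: sat_def)
  then have w': "w' \<subseteq> V" "odd (card w')"
    unfolding w'_def using assms(1,3-5) finite_subset[OF wV]
    by (simp_all add: flip_subset odd_card_flip_flip_iff)
  have "equiv_bf V \<phi>' \<phi>"
    unfolding \<phi>'_def w'_def using equiv_bf_slide assms(2,4-7) False by blast
  moreover have "card (odd_sat V \<phi>') = card (odd_sat V \<phi>)"
    unfolding \<phi>'_def using assms(2,3) w' False
    by (intro card_odd_sat_slide[OF assms(1)]) (simp_all add: odd_sat_def w'_def)
  moreover have "sat V \<phi>' = insert w' (sat V \<phi> - {w})"
    unfolding \<phi>'_def using sat_subset_Pow w' by (intro sat_mem) blast
  ultimately show ?thesis
    using assms(8,9) unfolding w'_def by blast
qed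

lemma cancel_odd_against_even:
  assumes "finite V"
  shows "w \<in> sat V \<phi> \<Longrightarrow> odd (card w) \<Longrightarrow> e \<in> sat V \<phi> \<Longrightarrow> even (card e) \<Longrightarrow>
    \<exists>\<psi>. equiv_bf V \<psi> \<phi> \<and> card (odd_sat V \<psi>) < card (odd_sat V \<phi>)"
proof (induction "card (sym_diff w e)" arbitrary: \<phi> w rule: less_induct)
  case less
  have wV: "w \<subseteq> V" and "e \<subseteq> V"
    using less.prems by (auto simp: sat_def)
  then have diff: "sym_diff w e \<subseteq> V" "finite (sym_diff w e)"
    using assms by (auto intro: finite_subset)
  have "w \<noteq> e"
    using less.prems by auto
  then obtain l where l: "l \<in> sym_diff w e"
    by blast
  then have lV: "l \<in> V"
    using diff(1) by blast
  consider "flip w l \<in> sat V \<phi>"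
    | l' where "l' \<in> sym_diff w e" "l' \<noteq> l" "flip w l \<notin> sat V \<phi>"
    using l less.prems(3) sym_diff_eq_singleton by blast
  then show ?case
  proof cases
    case 1
    then show ?thesis
      using cancel_flip_pair[OF assms less.prems(1,2) _ lV] by blast
  next
    case (2 l')
    then obtain \<phi>' where \<phi>': "equiv_bf V \<phi>' \<phi>" "card (odd_sat V \<phi>') = card (odd_sat V \<phi>)"
      "flip (flip w l) l' \<in> sat V \<phi>'" "e \<in> sat V \<phi>'"
      using move_odd_valuation[OF assms less.prems(1,2) lV _ _ _ less.prems(3)] diff(1) \<open>w \<noteq> e\<close>
      by blast
    have "card (sym_diff (flip (flip w l) l') e) < card (sym_diff w e)"
      using card_sym_diff_flip_flip_less diff(2) l 2 by blast
    moreover have "odd (card (flip (flip w l) l'))"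
      using finite_subset[OF wV assms] less.prems(2) odd_card_flip_flip_iff by blast
    ultimately obtain \<psi> where "equiv_bf V \<psi> \<phi>'" "card (odd_sat V \<psi>) < card (odd_sat V \<phi>')"
      using less.hyps \<phi>'(3,4) less.prems(4) by blast
    then show ?thesis
      using equiv_bf_trans[OF _ \<phi>'(1)] \<phi>'(2) by auto
  qed
qed

lemma equiv_bf_all_even:
  assumes "finite V"
  shows "eul V \<phi> \<ge> 0 \<Longrightarrow> \<exists>\<phi>min. equiv_bf V \<phi>min \<phi> \<and> (\<forall>\<nu>\<in>sat V \<phi>min. even (card \<nu>))"
proof (induction "card (odd_sat V \<phi>)" arbitrary: \<phi> rule: less_induct)
  case less
  show ?case
  proof (cases "\<forall>\<nu>\<in>sat V \<phi>. even (card \<nu>)")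
    case True
    then show ?thesis
      unfolding equiv_bf_def by blast
  next
    case False
    then obtain w where w: "w \<in> sat V \<phi>" "odd (card w)"
      by blast
    then obtain e where e: "e \<in> sat V \<phi>" "even (card e)"
      using eul_neg_if_all_odd[OF assms] less.prems by force
    obtain \<psi> where \<psi>: "equiv_bf V \<psi> \<phi>" "card (odd_sat V \<psi>) < card (odd_sat V \<phi>)"
      using cancel_odd_against_even[OF assms w e] by blast
    moreover have "eul V \<psi> \<ge> 0"
      using less.prems eul_equiv_bf[OF assms \<psi>(1)] by simp
    ultimately show ?thesis
      using less.hyps equiv_bf_trans by meson
  qed
qed

theorem lemma6p5:
  fixes k :: nat and \<phi> :: boolfun
  assumes "k \<ge> 1"
    and "eul {0..k} \<phi> \<ge> 0"
  shows "\<exists>\<phi>min :: boolfun. equiv_bf {0..k} \<phi>min \<phi> \<and>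
           (\<forall>\<nu>\<in>sat {0..k} \<phi>min. even (card \<nu>))"
  using equiv_bf_all_even[OF finite_atLeastAtMost assms(2)] .

end
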